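(* Let $\mathbb{K}=(G,M,I)$ be a finite reduced formal context, $\mathcal{A}$ the set of its proper premises, and $BC(\mathcal{A}):=\{A\in\mathcal{A}\mid |A|=1\}$. Then for every $A\in BC(\mathcal{A})$, the set $A^{\bullet}$ computed in $\mathbb{K}$ equals $A^{\bullet}$ computed in $BC(\mathbb{K})$, and both equal $A''\setminus A$. Furthermore, $BC(\mathcal{A})$ is exactly the set of all proper premises of $BC(\mathbb{K})$.
   Context: For a formal context $(G,M,I)$, derivation: $A'=\{m\in M\mid\forall g\in A:(g,m)\in I\}$ for $A\subseteq G$, and $B'=\{g\in G\mid\forall m\in B:(g,m)\in I\}$ for $B\subseteq M$. An object $g$ is irreducible if there is no $X\subseteq G$ with $g\notin X$ and $X'=\{g\}'$; an attribute $m$ is irreducible if there is no $X\subseteq M$ with $m\notin X$ and $X'=\{m\}'$; a context is reduced if all objects and attributes are irreducible. For $A\subseteq M$ define $A^{\bullet}:=A''\setminus\big(A\cup\bigcup_{n\in A}(A\setminus\{n\})''\big)$; $A$ is a proper premise if $A^{\bullet}\neq\emptyset$. For $m,n\in M$, $m\ge_{\mathbb{K}}n$ iff $\{m\}'\supseteq\{n\}'$. Let $\mathcal{M}(M)$ be the set of attributes whose attribute concept $(\{m\}',\{m\}'')$ is meet-irreducible in the concept lattice, and $\overline{\mathcal{M}(M)}=\{\overline m\mid m\in\mathcal{M}(M)\}$ new elements. The Birkhoff completion is $BC(\mathbb{K}):=\big(G\cup\overline{\mathcal{M}(M)},M,I\cup\{(\overline m,n)\in\overline{\mathcal{M}(M)}\times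 M\mid m\not\ge_{\mathbb{K}}n\}\big)$; "computed in $BC(\mathbb{K})$" means using the derivation operators of $BC(\mathbb{K})$ in the definition of $A^{\bullet}$ and of proper premise. *)

theory Defs
  imports Main
begin

record ('g, 'm) fcontext =
  objs :: "'g set"
  attrs :: "'m set"
  inc :: "('g \<times> 'm) set"

definition wf_context :: "('g, 'm) fcontext \<Rightarrow> bool" where
  "wf_context K \<longleftrightarrow> inc K \<subseteq> objs K \<times> attrs K"

definition intent :: "('g, 'm) fcontext \<Rightarrow> 'g set \<Rightarrow> 'm set" where
  "intent K A = {m \<in> attrs K. \<forall>g\<in>A. (g, m) \<in> inc K}"

definition extent :: "('g, 'm) fcontext \<Rightarrow> 'm set \<Rightarrow> 'g set" where
  "extent K B = {g \<in> objs K. \<forall>m\<in>B. (g, m) \<in> inc K}"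

definition aclosure :: "('g, 'm) fcontext \<Rightarrow> 'm set \<Rightarrow> 'm set" where
  "aclosure K B = intent K (extent K B)"

definition irreducible_obj :: "('g, 'm) fcontext \<Rightarrow> 'g \<Rightarrow> bool" where
  "irreducible_obj K g \<longleftrightarrow>
     \<not> (\<exists>X \<subseteq> objs K. g \<notin> X \<and> intent K X = intent K {g})"

definition irreducible_attr :: "('g, 'm) fcontext \<Rightarrow> 'm \<Rightarrow> bool" where
  "irreducible_attr K m \<longleftrightarrow>
     \<not> (\<exists>X \<subseteq> attrs K. m \<notin> X \<and> extent K X = extent K {m})"

definition reduced :: "('g, 'm) fcontext \<Rightarrow> bool" where
  "reduced K \<longleftrightarrow> (\<forall>g \<in> objs K. irreducible_obj K g) \<and> (\<forall>m \<in> attrs K. irreducible_attr K m)"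

definition bullet :: "('g, 'm) fcontext \<Rightarrow> 'm set \<Rightarrow> 'm set" where
  "bullet K A = aclosure K A - (A \<union> (\<Union>n\<in>A. aclosure K (A - {n})))"

definition proper_premises :: "('g, 'm) fcontext \<Rightarrow> 'm set set" where
  "proper_premises K = {A. A \<subseteq> attrs K \<and> bullet K A \<noteq> {}}"

definition attr_ge :: "('g, 'm) fcontext \<Rightarrow> 'm \<Rightarrow> 'm \<Rightarrow> bool" where
  "attr_ge K m n \<longleftrightarrow> extent K {m} \<supseteq> extent K {n}"

definition is_concept :: "('g, 'm) fcontext \<Rightarrow> 'g set \<times> 'm set \<Rightarrow> bool" where
  "is_concept K c \<longleftrightarrow> fst c \<subseteq> objs K \<and> snd c \<subseteq> attrs K \<and>
     intent K (fst c) = snd c \<and> extent K (snd c) = fst c"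

definition concept_le :: "'g set \<times> 'm set \<Rightarrow> 'g set \<times> 'm set \<Rightarrow> bool" where
  "concept_le c d \<longleftrightarrow> fst c \<subseteq> fst d"

definition concept_top :: "('g, 'm) fcontext \<Rightarrow> 'g set \<times> 'm set" where
  "concept_top K = (objs K, intent K (objs K))"

definition concept_meet :: "('g, 'm) fcontext \<Rightarrow> 'g set \<times> 'm set \<Rightarrow> 'g set \<times> 'm set \<Rightarrow> 'g set \<times> 'm set" where
  "concept_meet K c d = (fst c \<inter> fst d, intent K (fst c \<inter> fst d))"

definition meet_irreducible_concept :: "('g, 'm) fcontext \<Rightarrow> 'g set \<times> 'm set \<Rightarrow> bool" where
  "meet_irreducible_concept K c \<longleftrightarrow> is_concept K c \<and> c \<noteq> concept_top K \<and>
     (\<forall>d e. is_concept K d \<and> is_concept K e \<and> c = concept_meet K d e \<longrightarrow> c = d \<or> c = e)"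

definition attr_concept :: "('g, 'm) fcontext \<Rightarrow> 'm \<Rightarrow> 'g set \<times> 'm set" where
  "attr_concept K m = (extent K {m}, intent K (extent K {m}))"

definition meet_irr_attrs :: "('g, 'm) fcontext \<Rightarrow> 'm set" where
  "meet_irr_attrs K = {m \<in> attrs K. meet_irreducible_concept K (attr_concept K m)}"

text \<open>Birkhoff completion: new objects \<overline>m are represented as Inr m, old objects g as Inl g.\<close>
definition birkhoff_completion :: "('g, 'm) fcontext \<Rightarrow> ('g + 'm, 'm) fcontext" where
  "birkhoff_completion K =
     \<lparr> objs = Inl ` objs K \<union> Inr ` meet_irr_attrs K,
       attrs = attrs K,
       inc = {(Inl g, m) | g m. (g, m) \<in> inc K} \<union>
             {(Inr m, n) | m n. m \<in> meet_irr_attrs K \<and> n \<in> attrs K \<and> \<not> attr_ge K m n} \<rparr>"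

end

theory Submission
  imports Defs
begin

text \<open>
  In a reduced context every attribute concept is meet-irreducible, so \<open>BC(\<bbbK>)\<close> has a
  new object \<open>\<overline>m\<close> for every attribute \<open>m\<close>, and \<open>\<overline>m\<close> lacks exactly the
  attributes below \<open>m\<close>. Hence \<open>m \<in> A''\<close> in \<open>BC(\<bbbK>)\<close> iff \<open>m \<ge> a\<close> for some \<open>a \<in> A\<close>:
  the closure of \<open>BC(\<bbbK>)\<close> is the union of the closures of singletons, and these agree with
  those of \<open>\<bbbK>\<close>. So \<open>\<emptyset>\<close> is closed in both contexts, \<open>{a}\<^sup>\<bullet> = {a}'' - {a}\<close> in both,
  and a proper premise of \<open>BC(\<bbbK>)\<close> is a singleton: an element of \<open>A\<^sup>\<bullet>\<close> lies in
  \<open>{a}''\<close> for some \<open>a \<in> A\<close>, hence in \<open>(A - {n})''\<close> for every other \<open>n \<in> A\<close>.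
\<close>

lemma objs_birkhoff_completion [simp]:
  "objs (birkhoff_completion K) = Inl ` objs K \<union> Inr ` meet_irr_attrs K"
  and attrs_birkhoff_completion [simp]: "attrs (birkhoff_completion K) = attrs K"
  and inc_birkhoff_completion [simp]: "inc (birkhoff_completion K) =
     {(Inl g, m) | g m. (g, m) \<in> inc K} \<union>
     {(Inr m, n) | m n. m \<in> meet_irr_attrs K \<and> n \<in> attrs K \<and> \<not> attr_ge K m n}"
  by (simp_all add: birkhoff_completion_def)

lemma aclosure_mono: "A \<subseteq> B \<Longrightarrow> aclosure K A \<subseteq> aclosure K B"
  unfolding aclosure_def intent_def extent_def by blast

lemma extent_Un: "extent K (B \<union> C) = extent K B \<inter> extent K C"
  unfolding extent_def by blast

lemma mem_aclosure_singleton_iff: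
  "m \<in> aclosure K {a} \<longleftrightarrow> m \<in> attrs K \<and> attr_ge K m a"
  unfolding aclosure_def intent_def extent_def attr_ge_def by blast

lemma aclosure_empty_if_reduced:
  assumes "reduced K"
  shows "aclosure K {} = {}"
proof (rule ccontr)
  assume "aclosure K {} \<noteq> {}"
  then obtain m where m: "m \<in> aclosure K {}" by blast
  then have "m \<in> attrs K" and "extent K {m} = extent K {}"
    unfolding aclosure_def intent_def extent_def by auto
  then show False
    using assms unfolding reduced_def irreducible_attr_def by blast
qed

lemma attr_concept_eq_if_mem_intent:
  assumes d: "is_concept K (d1, d2)" and "m \<in> d2" and "extent K {m} = d1 \<inter> e1"
  shows "attr_concept K m = (d1, d2)"
proof -
  from d \<open>m \<in> d2\<close> have "d1 \<subseteq> extent K {m}"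
    unfolding is_concept_def extent_def by auto
  with \<open>extent K {m} = d1 \<inter> e1\<close> have "extent K {m} = d1" by blast
  with d show ?thesis
    unfolding attr_concept_def is_concept_def by simp
qed

lemma meet_irr_attr_if_irreducible_attr:
  assumes m: "m \<in> attrs K" and irr: "irreducible_attr K m"
  shows "m \<in> meet_irr_attrs K"
proof -
  let ?c = "attr_concept K m"
  have no_generators: "extent K X \<noteq> extent K {m}" if "X \<subseteq> attrs K" "m \<notin> X" for X
    using irr that unfolding irreducible_attr_def by blast
  have concept: "is_concept K ?c"
    using m unfolding is_concept_def attr_concept_def intent_def extent_def by auto
  have not_top: "?c \<noteq> concept_top K"
  proof
    assume "?c = concept_top K"
    then have "extent K {} = extent K {m}"
      unfolding attr_concept_def concept_top_def extent_def by auto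
    with no_generators[of "{}"] show False by simp
  qed
  have "?c = (d1, d2) \<or> ?c = (e1, e2)"
    if d: "is_concept K (d1, d2)" and e: "is_concept K (e1, e2)"
      and meet: "?c = concept_meet K (d1, d2) (e1, e2)"
    for d1 d2 e1 e2
  proof -
    have ext_m: "extent K {m} = d1 \<inter> e1"
      using meet unfolding attr_concept_def concept_meet_def by simp
    have "extent K (d2 \<union> e2) = extent K {m}"
      using d e ext_m extent_Un unfolding is_concept_def by (metis fst_conv snd_conv)
    with no_generators[of "d2 \<union> e2"] d e have "m \<in> d2 \<or> m \<in> e2"
      unfolding is_concept_def by auto
    with d e ext_m show ?thesis
      using attr_concept_eq_if_mem_intent[of K d1 d2 m] attr_concept_eq_if_mem_intent[of K e1 e2 m]
      by (auto simp: Int_commute)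
  qed
  then have "\<forall>d e. is_concept K d \<and> is_concept K e \<and> ?c = concept_meet K d e \<longrightarrow> ?c = d \<or> ?c = e"
    by (simp add: split_paired_All)
  with m concept not_top show ?thesis
    unfolding meet_irr_attrs_def meet_irreducible_concept_def by blast
qed

lemma meet_irr_attrs_if_reduced:
  assumes "reduced K"
  shows "meet_irr_attrs K = attrs K"
proof
  show "meet_irr_attrs K \<subseteq> attrs K"
    unfolding meet_irr_attrs_def by blast
  show "attrs K \<subseteq> meet_irr_attrs K"
  proof
    fix m
    assume "m \<in> attrs K"
    moreover from this assms have "irreducible_attr K m"
      unfolding reduced_def by blast
    ultimately show "m \<in> meet_irr_attrs K"
      by (rule meet_irr_attr_if_irreducible_attr)
  qed
qed

lemma aclosure_birkhoff_completion:
  assumes all_meet_irr: "attrs K \<subseteq> meet_irr_attrs K" and A: "A \<subseteq> attrs K"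
  shows "aclosure (birkhoff_completion K) A = (\<Union>a\<in>A. aclosure K {a})"
proof (intro equalityI subsetI)
  fix m
  assume closed: "m \<in> aclosure (birkhoff_completion K) A"
  then have m: "m \<in> attrs K"
    unfolding aclosure_def intent_def by simp
  show "m \<in> (\<Union>a\<in>A. aclosure K {a})"
  proof (rule ccontr)
    assume "m \<notin> (\<Union>a\<in>A. aclosure K {a})"
    then have "\<forall>a\<in>A. \<not> attr_ge K m a"
      using m mem_aclosure_singleton_iff by fast
    with m all_meet_irr A have "Inr m \<in> extent (birkhoff_completion K) A"
      unfolding extent_def by auto
    with closed have "(Inr m, m) \<in> inc (birkhoff_completion K)"
      unfolding aclosure_def intent_def by blast
    then show False
      by (auto simp: attr_ge_def)
  qed
next
  fix m
  assume "m \<in> (\<Union>a\<in>A. aclosure K {a})"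
  then obtain a where "a \<in> A" and m: "m \<in> attrs K" and ge: "attr_ge K m a"
    using mem_aclosure_singleton_iff by fast
  have "(x, m) \<in> inc (birkhoff_completion K)"
    if x: "x \<in> extent (birkhoff_completion K) A" for x
  proof (cases x)
    case (Inl g)
    with x \<open>a \<in> A\<close> have "g \<in> extent K {a}"
      unfolding extent_def by auto
    with ge Inl show ?thesis
      unfolding attr_ge_def extent_def by auto
  next
    case (Inr k)
    with x \<open>a \<in> A\<close> have "k \<in> meet_irr_attrs K" and "\<not> attr_ge K k a"
      unfolding extent_def by auto
    moreover from ge \<open>\<not> attr_ge K k a\<close> have "\<not> attr_ge K k m"
      unfolding attr_ge_def by blast
    ultimately show ?thesis
      using m Inr by simp
  qed
  with m show "m \<in> aclosure (birkhoff_completion K) A"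
    unfolding aclosure_def intent_def by auto
qed

lemma bullet_singleton:
  assumes "aclosure K {} = {}"
  shows "bullet K {a} = aclosure K {a} - {a}"
  using assms unfolding bullet_def by simp

lemma proper_premise_singleton_if_aclosure_UN:
  assumes closure_UN: "\<And>B. B \<subseteq> attrs K \<Longrightarrow> aclosure K B = (\<Union>b\<in>B. aclosure K {b})"
    and A: "A \<in> proper_premises K"
  shows "\<exists>a. A = {a}"
proof -
  from A obtain m where "A \<subseteq> attrs K" and m: "m \<in> bullet K A"
    unfolding proper_premises_def by blast
  then have "m \<in> (\<Union>b\<in>A. aclosure K {b})"
    using closure_UN unfolding bullet_def by simp
  then obtain a where "a \<in> A" and m_a: "m \<in> aclosure K {a}"
    by blast
  have "n = a" if "n \<in> A" for n
  proof (rule ccontr)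
    assume "n \<noteq> a"
    with \<open>a \<in> A\<close> have "aclosure K {a} \<subseteq> aclosure K (A - {n})"
      by (intro aclosure_mono) blast
    with m m_a \<open>n \<in> A\<close> show False
      unfolding bullet_def by blast
  qed
  with \<open>a \<in> A\<close> show ?thesis by blast
qed

lemma proper_premise_birkhoff_completion_singleton:
  assumes "attrs K \<subseteq> meet_irr_attrs K" and "A \<in> proper_premises (birkhoff_completion K)"
  shows "\<exists>a. A = {a}"
proof -
  have "aclosure (birkhoff_completion K) B = (\<Union>b\<in>B. aclosure (birkhoff_completion K) {b})"
    if B: "B \<subseteq> attrs K" for B
  proof -
    from B have "aclosure (birkhoff_completion K) B = (\<Union>b\<in>B. aclosure K {b})"
      using assms(1) by (simp add: aclosure_birkhoff_completion)
    also have "\<dots> = (\<Union>b\<in>B. aclosure (birkhoff_completion K) {b})"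
      using B assms(1) by (intro SUP_cong) (auto simp: aclosure_birkhoff_completion)
    finally show ?thesis .
  qed
  with assms(2) show ?thesis
    by (intro proper_premise_singleton_if_aclosure_UN) simp_all
qed

theorem mainTheorem7:
  fixes K :: "('g, 'm) fcontext"
  assumes "wf_context K"
    and "finite (objs K)" and "finite (attrs K)"
    and "reduced K"
  shows "(\<forall>A \<in> {A \<in> proper_premises K. card A = 1}.
            bullet K A = bullet (birkhoff_completion K) A \<and>
            bullet (birkhoff_completion K) A = aclosure K A - A)
         \<and> proper_premises (birkhoff_completion K) = {A \<in> proper_premises K. card A = 1}"
proof -
  let ?BC = "birkhoff_completion K"
  have all_meet_irr: "attrs K \<subseteq> meet_irr_attrs K"
    using meet_irr_attrs_if_reduced[OF assms(4)] by simp
  have bullets: "bullet K {a} = aclosure K {a} - {a}" "bullet ?BC {a} = aclosure K {a} - {a}"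
    if "a \<in> attrs K" for a
    using that all_meet_irr aclosure_empty_if_reduced[OF assms(4)]
    by (simp_all add: bullet_singleton aclosure_birkhoff_completion)
  have "A \<in> proper_premises ?BC \<longleftrightarrow> A \<in> proper_premises K \<and> card A = 1" for A
  proof (cases "\<exists>a. A = {a}")
    case True
    then obtain a where "A = {a}" by blast
    with bullets[of a] show ?thesis
      unfolding proper_premises_def by auto
  next
    case False
    with proper_premise_birkhoff_completion_singleton[OF all_meet_irr, of A] show ?thesis
      by (auto simp: card_1_singleton_iff)
  qed
  with bullets show ?thesis
    unfolding proper_premises_def by (auto simp: card_1_singleton_iff)
qed

end
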